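(* Let $n\in\mathbb{N}$ and let $f$ be an extremal function in the Krzyz problem for index $n$ satisfying $\{f\}_n=2\{f\}_0>0$. Then \[ f(z)=\exp\left(-\frac{1-z^n}{1+z^n}\right),\qquad z\in\Delta, \] i.e. such an $f$ is unique.
   Context: $\Delta=\{z\in\mathbb{C}:|z|<1\}$. For $f$ holomorphic in $\Delta$, $\{f\}_j$ denotes its $j$-th Taylor coefficient at $0$. The class $B$ consists of functions $f$ holomorphic in $\Delta$ with $0<|f(z)|\leqslant1$ for all $z\in\Delta$. For fixed $n\in\mathbb{N}$, $f\in B$ is called extremal in the Krzyz problem for index $n$ if $|\{f\}_n|=\max_{g\in B}|\{g\}_n|$; extremal functions are taken normalized so that $\{f\}_0>0$ and $\{f\}_n>0$. *)

theory Defs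
  imports "HOL-Complex_Analysis.Complex_Analysis"
begin

abbreviation unit_disc :: "complex set" where
  "unit_disc \<equiv> ball 0 1"

definition taylor_coeff :: "(complex \<Rightarrow> complex) \<Rightarrow> nat \<Rightarrow> complex" where
  "taylor_coeff f j = (deriv ^^ j) f 0 / of_nat (fact j)"

definition krzyz_class :: "(complex \<Rightarrow> complex) set" where
  "krzyz_class = {f. f holomorphic_on unit_disc \<and>
      (\<forall>z\<in>unit_disc. 0 < norm (f z) \<and> norm (f z) \<le> 1)}"

definition krzyz_extremal :: "nat \<Rightarrow> (complex \<Rightarrow> complex) \<Rightarrow> bool" where
  "krzyz_extremal n f \<longleftrightarrow> f \<in> krzyz_class \<and>
      (\<forall>g\<in>krzyz_class. norm (taylor_coeff g n) \<le> norm (taylor_coeff f n))"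

end

theory Submission
  imports Defs
begin

(* Multiplying an extremal f by the factor ((1 + rho)/2) (1 - eps z)/(1 - rho eps z), which
   again lies in B, and letting rho -> 1 shows that the trigonometric polynomial
   {f}_n/2 + sum_{k=1..n} {f}_{n-k} e^{ikt} has nonnegative real part.  Its two extreme
   coefficients {f}_n/2 and {f}_0 agree, and averaging it against e^{-imt} over n equally
   spaced nodes then forces {f}_k = 0 for 0 < k < n.  Writing f = exp (-p) with Re p >= 0,
   the coefficients of p vanish in the same range and p_n = -2.  Comparing f with the
   competitors exp (-s p), s > 0, gives s exp (-s p(0)) <= exp (-p(0)), hence p(0) = 1.
   Finally (p - 1)/(p + 1) = z^n psi with |psi| <= 1 and psi(0) = -1, so psi = -1 by the
   maximum modulus principle, i.e. p = (1 - z^n)/(1 + z^n). *)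

lemma taylor_coeff_eq_fps_nth:
  assumes "f has_fps_expansion F"
  shows "taylor_coeff f k = fps_nth F k"
  by (simp add: taylor_coeff_def fps_nth_fps_expansion[OF assms])

lemma taylor_coeff_eq_fps_expansion_nth: "taylor_coeff f k = fps_nth (fps_expansion f 0) k"
  by (simp add: taylor_coeff_def fps_expansion_def)

lemma holomorphic_on_unit_disc_has_fps_expansion:
  assumes "f holomorphic_on unit_disc"
  shows "f has_fps_expansion fps_expansion f 0"
  using assms by (intro has_fps_expansion_fps_expansion[of unit_disc]) auto

lemma taylor_coeff_mult:
  assumes "f holomorphic_on unit_disc" "g holomorphic_on unit_disc"
  shows "taylor_coeff (\<lambda>z. f z * g z) n = (\<Sum>k=0..n. taylor_coeff f k * taylor_coeff g (n - k))"
  unfolding taylor_coeff_eq_fps_nth[OF has_fps_expansion_mult[OF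
      holomorphic_on_unit_disc_has_fps_expansion[OF assms(1)]
      holomorphic_on_unit_disc_has_fps_expansion[OF assms(2)]]]
  by (simp only: fps_mult_nth taylor_coeff_eq_fps_expansion_nth)

lemma taylor_coeff_cong_unit_disc:
  assumes "\<And>z. z \<in> unit_disc \<Longrightarrow> f z = g z"
  shows "taylor_coeff f = taylor_coeff g"
proof -
  have "eventually (\<lambda>z. f z = g z) (nhds 0)"
    using eventually_nhds_in_open[of unit_disc 0] assms by (auto elim: eventually_mono)
  then have "fps_expansion f 0 = fps_expansion g 0"
    by (rule fps_expansion_cong)
  then show ?thesis
    by (simp add: fun_eq_iff taylor_coeff_eq_fps_expansion_nth)
qed

section \<open>Averaging trigonometric polynomials over equispaced nodes\<close>

lemma sum_cis_equispaced:
  fixes k :: int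
  assumes "n > 0"
  shows "(\<Sum>j<n. cis (of_int k * (\<beta> + 2 * pi * real j / real n))) =
           (if int n dvd k then of_nat n * cis (of_int k * \<beta>) else 0)"
proof -
  define w where "w = cis (2 * pi * of_int k / real n)"
  have summand: "cis (of_int k * (\<beta> + 2 * pi * real j / real n)) = cis (of_int k * \<beta>) * w ^ j" for j
  proof -
    have "of_int k * (\<beta> + 2 * pi * real j / real n) = of_int k * \<beta> + real j * (2 * pi * of_int k / real n)"
      by (simp add: algebra_simps)
    then show ?thesis unfolding w_def Complex.DeMoivre cis_mult by simp
  qed
  show ?thesis
  proof (cases "int n dvd k")
    case True
    then obtain q where "k = int n * q" by blast
    then have "2 * pi * of_int k / real n = 2 * pi * of_int q"
      using assms by simp
    then have "w = 1"
      unfolding w_def by (metis cis_multiple_2pi Ints_of_int)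
    then show ?thesis using True by (simp add: summand)
  next
    case False
    have "w \<noteq> 1"
    proof
      assume "w = 1"
      then obtain q :: int where "2 * pi * of_int k / real n = of_int q * 2 * pi"
        by (auto simp: w_def complex_eq_iff cos_one_2pi_int)
      then have "of_int k = (of_int (int n * q) :: real)"
        using assms by (simp add: field_simps)
      then show False using False by (simp only: of_int_eq_iff) simp
    qed
    moreover have "w ^ n = 1"
      using assms by (simp add: w_def Complex.DeMoivre)
    ultimately have "(\<Sum>j<n. w ^ j) = 0"
      by (simp add: geometric_sum)
    then show ?thesis using False by (simp add: summand flip: sum_distrib_left)
  qed
qed

lemma sum_trig_equispaced:
  fixes e :: "'a \<Rightarrow> int" and c :: "'a \<Rightarrow> complex"
  assumes "n > 0" "finite K"
  shows "(\<Sum>j<n. \<Sum>k\<in>K. c k * cis (of_int (e k) * (\<beta> + 2 * pi * real j / real n))) =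
           of_nat n * (\<Sum>k\<in>{k\<in>K. int n dvd e k}. c k * cis (of_int (e k) * \<beta>))"
proof -
  have "(\<Sum>j<n. \<Sum>k\<in>K. c k * cis (of_int (e k) * (\<beta> + 2 * pi * real j / real n))) =
      (\<Sum>k\<in>K. c k * (\<Sum>j<n. cis (of_int (e k) * (\<beta> + 2 * pi * real j / real n))))"
    by (simp add: sum.swap[of _ "{..<n}"] sum_distrib_left)
  also have "\<dots> = (\<Sum>k\<in>K. of_nat n * (if int n dvd e k then c k * cis (of_int (e k) * \<beta>) else 0))"
    by (intro sum.cong refl) (simp add: sum_cis_equispaced[OF assms(1)])
  also have "\<dots> = of_nat n * (\<Sum>k\<in>{k\<in>K. int n dvd e k}. c k * cis (of_int (e k) * \<beta>))"
    by (simp add: sum.inter_filter[OF assms(2)] sum_distrib_left)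
  finally show ?thesis .
qed

lemma int_dvd_imp_eq_0:
  fixes x :: int
  assumes "int n dvd x" "\<bar>x\<bar> < int n"
  shows "x = 0"
  using dvd_imp_le_int[of x "int n"] assms by fastforce

lemma sum_trig_poly_equispaced:
  fixes c :: "nat \<Rightarrow> complex"
  assumes "n > 0"
  shows "(\<Sum>j<n. \<Sum>k\<le>n. c k * cis (real k * (\<beta> + 2 * pi * real j / real n))) =
           of_nat n * (c 0 + c n * cis (real n * \<beta>))"
proof -
  have "{k\<in>{..n}. int n dvd int k} = {0, n}"
    using assms by (auto dest: dvd_imp_le)
  then show ?thesis
    using sum_trig_equispaced[OF assms finite_atMost, of c int \<beta>] assms by simp
qed

lemma Re_trig_poly_moment_equispaced:
  fixes c :: "nat \<Rightarrow> complex" and \<beta> :: real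
  assumes m: "0 < m" "m < n"
  defines "\<theta> \<equiv> \<lambda>j. \<beta> + 2 * pi * real j / real n"
  shows "(\<Sum>j<n. of_real (Re (\<Sum>k\<le>n. c k * cis (real k * \<theta> j))) * cis (- (real m * \<theta> j))) =
           of_nat n / 2 * (c m + cnj (c (n - m)) * cis (- (real n * \<beta>)))"
proof -
  have n: "n > 0" using m by simp
  have "{k\<in>{..n}. int n dvd (int k - int m)} = {m}"
    using m by (auto dest: int_dvd_imp_eq_0)
  moreover have "(\<Sum>k\<le>n. c k * cis (real k * t)) * cis (- (real m * t)) =
      (\<Sum>k\<le>n. c k * cis (of_int (int k - int m) * t))" for t
    unfolding sum_distrib_right mult.assoc cis_mult by (simp add: algebra_simps)
  ultimately have moment: "(\<Sum>j<n. (\<Sum>k\<le>n. c k * cis (real k * \<theta> j)) * cis (- (real m * \<theta> j))) =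
      of_nat n * c m"
    using sum_trig_equispaced[OF n finite_atMost[of n], of c "\<lambda>k. int k - int m" \<beta>]
    by (simp add: \<theta>_def)
  have "{k\<in>{..n}. int n dvd - (int k + int m)} = {n - m}"
  proof -
    have "int k + int m - int n = 0" if "k \<le> n" "int n dvd - (int k + int m)" for k
    proof (rule int_dvd_imp_eq_0)
      show "int n dvd int k + int m - int n"
        using that(2) by (metis dvd_minus_iff dvd_diff dvd_refl)
    qed (use that m in auto)
    then show ?thesis using m by force
  qed
  moreover have "cnj (\<Sum>k\<le>n. c k * cis (real k * t)) * cis (- (real m * t)) =
      (\<Sum>k\<le>n. cnj (c k) * cis (of_int (- (int k + int m)) * t))" for t
    unfolding cnj_sum complex_cnj_mult cis_cnj sum_distrib_right mult.assoc cis_mult by (simp add: algebra_simps)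
  ultimately have conj_moment: "(\<Sum>j<n. cnj (\<Sum>k\<le>n. c k * cis (real k * \<theta> j)) * cis (- (real m * \<theta> j))) =
      of_nat n * (cnj (c (n - m)) * cis (- (real n * \<beta>)))"
    using sum_trig_equispaced[OF n finite_atMost[of n], of "\<lambda>k. cnj (c k)" "\<lambda>k. - (int k + int m)" \<beta>] m
    by (simp add: \<theta>_def)
  have Re_mult: "of_real (Re z) * w = (z * w + cnj z * w) / 2" for z w :: complex
    by (simp add: complex_add_cnj distrib_right[symmetric])
  show ?thesis
    unfolding Re_mult sum_divide_distrib[symmetric] sum.distrib moment conj_moment
    by (simp add: algebra_simps)
qed

lemma norm_le_if_Re_mult_le:
  fixes w :: complex
  assumes "\<And>\<gamma>. norm \<gamma> \<le> 1 \<Longrightarrow> Re (\<gamma> * w) \<le> B"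
  shows "norm w \<le> B"
proof (cases "w = 0")
  case True
  then show ?thesis using assms[of 0] by simp
next
  case False
  have "cnj w * w = of_real (norm w ^ 2)"
    by (metis complex_norm_square mult.commute)
  then have "Re (cnj w / of_real (norm w) * w) = norm w"
    using False by (simp add: power2_eq_square)
  moreover have "norm (cnj w / of_real (norm w)) \<le> 1"
    using False by (simp add: norm_divide)
  ultimately show ?thesis using assms by fastforce
qed

lemma trig_poly_coeff_bound:
  fixes c :: "nat \<Rightarrow> complex" and \<beta> :: real
  assumes m: "0 < m" "m < n"
    and nonneg: "\<And>t. 0 \<le> Re (\<Sum>k\<le>n. c k * cis (real k * t))"
  shows "norm (c m + cnj (c (n - m)) * cis (- (real n * \<beta>))) \<le> 2 * Re (c 0 + c n * cis (real n * \<beta>))"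
proof (rule norm_le_if_Re_mult_le)
  (* Average the nonnegative numbers Re T(theta j) (1 - Re (gamma e^{-i m theta j})) over the
     nodes theta j = beta + 2 pi j / n. *)
  fix \<gamma> :: complex
  assume \<gamma>: "norm \<gamma> \<le> 1"
  define T where "T = (\<lambda>t. \<Sum>k\<le>n. c k * cis (real k * t))"
  define \<theta> where "\<theta> = (\<lambda>j. \<beta> + 2 * pi * real j / real n)"
  define w where "w = c m + cnj (c (n - m)) * cis (- (real n * \<beta>))"
  have "Re (\<gamma> * cis (- (real m * \<theta> j))) \<le> 1" for j
    using complex_Re_le_cmod[of "\<gamma> * cis (- (real m * \<theta> j))"] \<gamma> by (simp add: norm_mult)
  then have "0 \<le> (\<Sum>j<n. Re (T (\<theta> j)) * (1 - Re (\<gamma> * cis (- (real m * \<theta> j)))))"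
    using nonneg by (intro sum_nonneg mult_nonneg_nonneg) (auto simp: T_def)
  also have "\<dots> = Re (\<Sum>j<n. T (\<theta> j)) - Re (\<gamma> * (\<Sum>j<n. of_real (Re (T (\<theta> j))) * cis (- (real m * \<theta> j))))"
    by (simp add: sum_subtractf right_diff_distrib sum_distrib_left mult.left_commute distrib_left)
  also have "\<dots> = real n * Re (c 0 + c n * cis (real n * \<beta>)) - real n / 2 * Re (\<gamma> * w)"
  proof -
    have sum: "(\<Sum>j<n. T (\<theta> j)) = of_nat n * (c 0 + c n * cis (real n * \<beta>))"
      unfolding T_def \<theta>_def by (rule sum_trig_poly_equispaced) (use m in simp)
    have moment: "(\<Sum>j<n. of_real (Re (T (\<theta> j))) * cis (- (real m * \<theta> j))) = of_nat n / 2 * w"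
      unfolding T_def \<theta>_def w_def by (rule Re_trig_poly_moment_equispaced[OF m])
    show ?thesis
      unfolding sum moment by (simp add: mult.left_commute[of \<gamma>])
  qed
  finally have "real n * Re (\<gamma> * w) \<le> real n * (2 * Re (c 0 + c n * cis (real n * \<beta>)))"
    by linarith
  then show "Re (\<gamma> * w) \<le> 2 * Re (c 0 + c n * cis (real n * \<beta>))"
    by (rule mult_left_le_imp_le) (use m in simp)
qed

lemma trig_poly_coeff_eq_0:
  fixes c :: "nat \<Rightarrow> complex"
  assumes m: "0 < m" "m < n" and c0: "c 0 = of_real r" and cn: "c n = of_real r"
    and nonneg: "\<And>t. 0 \<le> Re (\<Sum>k\<le>n. c k * cis (real k * t))"
  shows "c m = 0"
proof -
  have bound: "norm (c m + cnj (c (n - m)) * cis (- x)) \<le> r * norm (1 + cis (- x)) ^ 2" for x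
  proof -
    have "norm (1 + cis (- x)) ^ 2 = (1 + cos x) ^ 2 + (sin x) ^ 2"
      by (simp add: cmod_power2)
    also have "\<dots> = 2 * (1 + cos x)"
      using sin_cos_squared_add[of x] by (simp add: power2_sum)
    finally have sq: "norm (1 + cis (- x)) ^ 2 = 2 * (1 + cos x)" .
    have nx: "real n * (x / real n) = x"
      using m by simp
    have "norm (c m + cnj (c (n - m)) * cis (- x)) \<le> 2 * Re (c 0 + c n * cis x)"
      using trig_poly_coeff_bound[OF m nonneg, of "x / real n"] unfolding nx .
    also have "\<dots> = r * norm (1 + cis (- x)) ^ 2"
      unfolding sq c0 cn by (simp add: algebra_simps)
    finally show ?thesis .
  qed
  (* x = pi gives c m = cnj (c (n - m)); then the bound reads |c m| <= r |1 + e^{-ix}|,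
     which tends to 0 as x -> pi. *)
  have cis_minus_pi: "cis (- pi) = - 1"
    by (simp add: complex_eq_iff)
  have "norm (c m - cnj (c (n - m))) \<le> 0"
    using bound[of pi] by (simp add: cis_minus_pi)
  then have sym: "cnj (c (n - m)) = c m"
    by simp
  have le: "norm (c m) \<le> r * norm (1 + cis (- x))" if "1 + cis (- x) \<noteq> 0" for x
  proof -
    have factor: "c m + cnj (c (n - m)) * cis (- x) = c m * (1 + cis (- x))"
      unfolding sym by (simp add: distrib_left)
    have "norm (c m) * norm (1 + cis (- x)) \<le> (r * norm (1 + cis (- x))) * norm (1 + cis (- x))"
      using bound[of x] unfolding factor norm_mult power2_eq_square mult.assoc .
    then show ?thesis
      by (rule mult_right_le_imp_le) (use that in simp)
  qed
  have near_pi: "eventually (\<lambda>x. 1 + cis (- x) \<noteq> 0) (at_left pi)"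
    unfolding eventually_at_left_field
  proof (intro exI[of _ 0] conjI allI impI)
    fix x :: real
    assume "0 < x" "x < pi"
    then have "Re (1 + cis (- x)) > 0"
      using cos_monotone_0_pi[of x pi] by simp
    then show "1 + cis (- x) \<noteq> 0"
      by (metis zero_complex.sel(1) less_irrefl)
  qed simp
  have "eventually (\<lambda>x. norm (c m) \<le> r * norm (1 + cis (- x))) (at_left pi)"
    using near_pi by (rule eventually_mono) (rule le)
  moreover have "((\<lambda>x. r * norm (1 + cis (- x))) \<longlongrightarrow> r * norm (1 + cis (- pi))) (at_left pi)"
    by (intro tendsto_intros)
  ultimately have "norm (c m) \<le> r * norm (1 + cis (- pi))"
    using tendsto_lowerbound trivial_limit_at_left_real by blast
  then show ?thesis
    by (simp add: cis_minus_pi)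
qed

section \<open>The variational inequality for extremal functions\<close>

lemma norm_scaled_one_minus_le:
  fixes u :: complex and \<rho> :: real
  assumes u: "norm u \<le> 1" and \<rho>: "0 \<le> \<rho>" "\<rho> \<le> 1"
  shows "norm (of_real ((1 + \<rho>) / 2) * (1 - u)) \<le> norm (1 - of_real \<rho> * u)"
proof (rule power2_le_imp_le)
  define x y l where "x = Re u" and "y = Im u" and "l = (1 + \<rho>) / 2"
  have xy: "x\<^sup>2 + y\<^sup>2 \<le> 1"
    using u by (simp add: x_def y_def cmod_power2[symmetric] power_le_one)
  then have "x\<^sup>2 \<le> 1"
    using zero_le_power2[of y] by linarith
  then have "-1 \<le> x"
    using power2_le_imp_le[of "- x" 1] by simp
  then have "0 \<le> (1 - \<rho>)\<^sup>2 * (1 + x) / 2"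
    by simp
  moreover have "\<rho>\<^sup>2 \<le> l\<^sup>2"
    using \<rho> by (intro power_mono) (auto simp: l_def)
  then have "0 \<le> (1 - (x\<^sup>2 + y\<^sup>2)) * (l\<^sup>2 - \<rho>\<^sup>2)"
    using xy by (intro mult_nonneg_nonneg) simp_all
  ultimately have "0 \<le> (1 - \<rho>)\<^sup>2 * (1 + x) / 2 + (1 - (x\<^sup>2 + y\<^sup>2)) * (l\<^sup>2 - \<rho>\<^sup>2)"
    by (rule add_nonneg_nonneg)
  also have "\<dots> = ((1 - \<rho> * x)\<^sup>2 + (\<rho> * y)\<^sup>2) - l\<^sup>2 * ((1 - x)\<^sup>2 + y\<^sup>2)"
    by (simp add: l_def power2_eq_square field_simps)
  finally show "(norm (of_real l * (1 - u)))\<^sup>2 \<le> (norm (1 - of_real \<rho> * u))\<^sup>2"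
    by (simp add: norm_mult power_mult_distrib cmod_power2 x_def y_def)
qed simp

lemma krzyz_class_mult:
  assumes "f \<in> krzyz_class" "g \<in> krzyz_class"
  shows "(\<lambda>z. f z * g z) \<in> krzyz_class"
  using assms unfolding krzyz_class_def
  by (auto intro!: holomorphic_intros mult_le_one simp: norm_mult)

definition variation_factor :: "real \<Rightarrow> complex \<Rightarrow> complex \<Rightarrow> complex" where
  "variation_factor \<rho> \<epsilon> z = of_real ((1 + \<rho>) / 2) * (1 - \<epsilon> * z) / (1 - of_real \<rho> * \<epsilon> * z)"

lemma variation_factor_in_krzyz_class:
  assumes \<epsilon>: "norm \<epsilon> \<le> 1" and \<rho>: "0 \<le> \<rho>" "\<rho> < 1"
  shows "variation_factor \<rho> \<epsilon> \<in> krzyz_class"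
  unfolding krzyz_class_def mem_Collect_eq
proof (intro conjI ballI)
  have \<epsilon>z: "norm (\<epsilon> * z) < 1" if "z \<in> unit_disc" for z
  proof -
    have "norm (\<epsilon> * z) \<le> norm z"
      using \<epsilon> by (simp add: norm_mult mult_left_le_one_le)
    then show ?thesis using that by simp
  qed
  have den: "1 - of_real \<rho> * \<epsilon> * z \<noteq> 0" if "z \<in> unit_disc" for z
  proof -
    have "norm (of_real \<rho> * \<epsilon> * z) \<le> norm (\<epsilon> * z)"
      using \<rho> by (simp add: norm_mult mult.assoc mult_left_le_one_le)
    then show ?thesis
      using \<epsilon>z[OF that] by auto
  qed
  show "variation_factor \<rho> \<epsilon> holomorphic_on unit_disc"
    unfolding variation_factor_def using den by (intro holomorphic_intros) auto
  fix z :: complex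
  assume z: "z \<in> unit_disc"
  have "1 - \<epsilon> * z \<noteq> 0"
    using \<epsilon>z[OF z] by auto
  moreover have "1 + complex_of_real \<rho> \<noteq> 0"
    using \<rho> by (simp add: complex_eq_iff)
  ultimately show "0 < norm (variation_factor \<rho> \<epsilon> z)"
    using den[OF z] by (simp add: variation_factor_def)
  have "norm (of_real ((1 + \<rho>) / 2) * (1 - \<epsilon> * z)) \<le> norm (1 - of_real \<rho> * \<epsilon> * z)"
    using norm_scaled_one_minus_le[of "\<epsilon> * z" \<rho>] \<epsilon>z[OF z] \<rho> by (simp add: mult.assoc)
  then show "norm (variation_factor \<rho> \<epsilon> z) \<le> 1"
    using den[OF z] unfolding variation_factor_def norm_divide by (subst divide_le_eq_1_pos) auto
qed

lemma inverse_one_minus_fps_X_scaled: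
  fixes c :: complex
  shows "inverse (1 - fps_const c * fps_X) = Abs_fps (\<lambda>k. c ^ k)"
proof (rule fps_inverse_unique)
  show "(1 - fps_const c * fps_X) * Abs_fps (\<lambda>k. c ^ k) = 1"
  proof (rule fps_ext)
    fix k
    show "fps_nth ((1 - fps_const c * fps_X) * Abs_fps (\<lambda>k. c ^ k)) k = fps_nth 1 k"
      by (cases k) (simp_all add: algebra_simps)
  qed
qed

lemma variation_factor_has_fps_expansion:
  "variation_factor \<rho> \<epsilon> has_fps_expansion
     Abs_fps (\<lambda>k. if k = 0 then of_real ((1 + \<rho>) / 2)
                  else - of_real ((1 + \<rho>) / 2 * (1 - \<rho>) * \<rho> ^ (k - 1)) * \<epsilon> ^ k)"
    (is "_ has_fps_expansion ?H")
proof -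
  define l :: complex where "l = of_real ((1 + \<rho>) / 2)"
  define c where "c = of_real \<rho> * \<epsilon>"
  define G where "G = Abs_fps (\<lambda>k. c ^ k)"
  have fun_eq: "variation_factor \<rho> \<epsilon> = (\<lambda>z. l * (1 - \<epsilon> * z) * inverse (1 - c * z))"
    unfolding variation_factor_def l_def c_def divide_inverse mult.assoc ..
  have linear: "(\<lambda>z. 1 - a * z) has_fps_expansion 1 - fps_const a * fps_X" for a :: complex
    by (intro has_fps_expansion_diff has_fps_expansion_1 has_fps_expansion_cmult_left has_fps_expansion_fps_X)
  have "(\<lambda>z. l * (1 - \<epsilon> * z) * inverse (1 - c * z)) has_fps_expansion
      fps_const l * (1 - fps_const \<epsilon> * fps_X) * G"
    unfolding G_def inverse_one_minus_fps_X_scaled[symmetric]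
    by (intro has_fps_expansion_mult has_fps_expansion_cmult_left has_fps_expansion_inverse linear) simp
  moreover have "fps_const l * (1 - fps_const \<epsilon> * fps_X) * G = ?H"
  proof (rule fps_ext)
    fix k
    have "fps_nth (fps_const l * (1 - fps_const \<epsilon> * fps_X) * G) k = l * (fps_nth G k - \<epsilon> * fps_nth (fps_X * G) k)"
      by (simp only: mult.assoc left_diff_distrib mult_1 fps_mult_left_const_nth fps_sub_nth)
    also have "\<dots> = fps_nth ?H k"
    proof (cases k)
      case (Suc j)
      have "c ^ Suc j - \<epsilon> * c ^ j = - (of_real ((1 - \<rho>) * \<rho> ^ j) * \<epsilon> ^ Suc j)"
        by (simp add: c_def algebra_simps)
      then show ?thesis
        using Suc by (simp add: G_def l_def mult.assoc)
    qed (simp add: G_def l_def)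
    finally show "fps_nth (fps_const l * (1 - fps_const \<epsilon> * fps_X) * G) k = fps_nth ?H k" .
  qed
  ultimately show ?thesis
    unfolding fun_eq by simp
qed

lemma taylor_coeff_variation_factor:
  "taylor_coeff (variation_factor \<rho> \<epsilon>) k =
     (if k = 0 then of_real ((1 + \<rho>) / 2) else - of_real ((1 + \<rho>) / 2 * (1 - \<rho>) * \<rho> ^ (k - 1)) * \<epsilon> ^ k)"
  by (simp add: taylor_coeff_eq_fps_nth[OF variation_factor_has_fps_expansion])

lemma krzyz_extremal_variation_factor_ineq:
  assumes ext: "krzyz_extremal n f" and an: "taylor_coeff f n = of_real A" and A: "0 \<le> A"
    and \<epsilon>: "norm \<epsilon> \<le> 1" and \<rho>: "0 \<le> \<rho>" "\<rho> < 1"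
  shows "0 \<le> A / 2 + (1 + \<rho>) / 2 *
           Re (\<Sum>k=1..n. of_real (\<rho> ^ (k - 1)) * \<epsilon> ^ k * taylor_coeff f (n - k))"
proof -
  define l where "l = (1 + \<rho>) / 2"
  define S where "S = (\<Sum>k=1..n. of_real (\<rho> ^ (k - 1)) * \<epsilon> ^ k * taylor_coeff f (n - k))"
  define h where "h = variation_factor \<rho> \<epsilon>"
  have fB: "f \<in> krzyz_class" and max: "\<And>g. g \<in> krzyz_class \<Longrightarrow> norm (taylor_coeff g n) \<le> A"
    using ext an A by (auto simp: krzyz_extremal_def)
  have hB: "h \<in> krzyz_class"
    unfolding h_def using \<epsilon> \<rho> by (rule variation_factor_in_krzyz_class)
  have "taylor_coeff (\<lambda>z. h z * f z) n = (\<Sum>k=0..n. taylor_coeff h k * taylor_coeff f (n - k))"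
    using hB fB by (intro taylor_coeff_mult) (auto simp: krzyz_class_def)
  also have "\<dots> = taylor_coeff h 0 * taylor_coeff f n + (\<Sum>k=1..n. taylor_coeff h k * taylor_coeff f (n - k))"
    by (simp add: sum.atLeast_Suc_atMost)
  also have "\<dots> = of_real (l * A) - of_real (l * (1 - \<rho>)) * S"
    by (simp add: h_def taylor_coeff_variation_factor an l_def S_def sum_distrib_left sum_negf
        algebra_simps flip: sum.distrib)
  finally have coeff: "taylor_coeff (\<lambda>z. h z * f z) n = of_real (l * A) - of_real (l * (1 - \<rho>)) * S" .
  have "Re (taylor_coeff (\<lambda>z. h z * f z) n) \<le> A"
    using max[OF krzyz_class_mult[OF hB fB]] complex_Re_le_cmod order_trans by blast
  then have "l * A - l * (1 - \<rho>) * Re S \<le> A"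
    unfolding coeff by simp
  moreover have "(1 - \<rho>) * (A / 2 + l * Re S) = A - (l * A - l * (1 - \<rho>) * Re S)"
    unfolding l_def by (simp add: field_simps)
  ultimately have "0 \<le> (1 - \<rho>) * (A / 2 + l * Re S)"
    by linarith
  then show ?thesis
    using \<rho> by (simp add: S_def l_def zero_le_mult_iff)
qed

lemma krzyz_extremal_variation_ineq:
  assumes ext: "krzyz_extremal n f" and an: "taylor_coeff f n = of_real A" and A: "0 \<le> A"
    and \<epsilon>: "norm \<epsilon> \<le> 1"
  shows "0 \<le> A / 2 + Re (\<Sum>k=1..n. \<epsilon> ^ k * taylor_coeff f (n - k))"
proof -
  define V where "V = (\<lambda>\<rho>. A / 2 + (1 + \<rho>) / 2 *
    Re (\<Sum>k=1..n. of_real (\<rho> ^ (k - 1)) * \<epsilon> ^ k * taylor_coeff f (n - k)))"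
  have "(V \<longlongrightarrow> V 1) (at_left 1)"
    unfolding V_def by (intro tendsto_intros) simp
  moreover have "eventually (\<lambda>\<rho>. 0 \<le> V \<rho>) (at_left 1)"
    unfolding eventually_at_left_field V_def
    using krzyz_extremal_variation_factor_ineq[OF ext an A \<epsilon>] by (intro exI[of _ 0]) auto
  ultimately have "0 \<le> V 1"
    using tendsto_lowerbound trivial_limit_at_left_real by blast
  then show ?thesis
    by (simp add: V_def)
qed

lemma krzyz_extremal_coeff_eq_0:
  assumes ext: "krzyz_extremal n f" and r: "0 \<le> r"
    and a0: "taylor_coeff f 0 = of_real r" and an: "taylor_coeff f n = of_real (2 * r)"
    and k: "0 < k" "k < n"
  shows "taylor_coeff f k = 0"
proof -
  define c where "c = (\<lambda>j. if j = 0 then of_real r else taylor_coeff f (n - j))"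
  have nonneg: "0 \<le> Re (\<Sum>j\<le>n. c j * cis (real j * t))" for t
  proof -
    have "(\<Sum>j\<le>n. c j * cis (real j * t)) = c 0 + (\<Sum>j=1..n. c j * cis (real j * t))"
      by (simp add: atMost_atLeast0 sum.atLeast_Suc_atMost)
    also have "(\<Sum>j=1..n. c j * cis (real j * t)) = (\<Sum>j=1..n. cis t ^ j * taylor_coeff f (n - j))"
      by (intro sum.cong) (auto simp: c_def Complex.DeMoivre)
    finally have "(\<Sum>j\<le>n. c j * cis (real j * t)) = of_real r + (\<Sum>j=1..n. cis t ^ j * taylor_coeff f (n - j))"
      by (simp add: c_def)
    moreover have "0 \<le> 2 * r / 2 + Re (\<Sum>j=1..n. cis t ^ j * taylor_coeff f (n - j))"
      using r by (intro krzyz_extremal_variation_ineq[OF ext an]) simp_all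
    ultimately show ?thesis
      by simp
  qed
  have c0: "c 0 = of_real r" and cn: "c n = of_real r"
    using a0 k by (simp_all add: c_def)
  have "c (n - k) = 0"
    by (rule trig_poly_coeff_eq_0[of "n - k" n c r]) (use k c0 cn nonneg in auto)
  then show ?thesis
    using k by (simp add: c_def)
qed

section \<open>Exponential representation\<close>

lemma krzyz_class_imp_exp_neg:
  assumes fB: "f \<in> krzyz_class" and f0: "f 0 = of_real r" and r: "0 < r"
  obtains p where "p holomorphic_on unit_disc" "p 0 = of_real (- ln r)"
    "\<And>z. z \<in> unit_disc \<Longrightarrow> 0 \<le> Re (p z)" "\<And>z. z \<in> unit_disc \<Longrightarrow> f z = exp (- p z)"
proof -
  have fhol: "f holomorphic_on unit_disc" and fnz: "\<And>z. z \<in> unit_disc \<Longrightarrow> f z \<noteq> 0"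
    and fle: "\<And>z. z \<in> unit_disc \<Longrightarrow> norm (f z) \<le> 1"
    using fB by (auto simp: krzyz_class_def)
  obtain g where ghol: "g holomorphic_on unit_disc" and fg: "\<And>z. z \<in> unit_disc \<Longrightarrow> f z = exp (g z)"
    using contractible_imp_holomorphic_log[OF fhol convex_imp_contractible[OF convex_ball] fnz] by blast
  define p where "p = (\<lambda>z. g 0 - g z - of_real (ln r))"
  have exp_g0: "exp (g 0) = of_real r"
    using fg[of 0] f0 by simp
  have f_eq: "f z = exp (- p z)" if "z \<in> unit_disc" for z
  proof -
    have "- p z = (g z + of_real (ln r)) - g 0"
      by (simp add: p_def)
    then have "exp (- p z) = exp (g z) * exp (of_real (ln r)) / exp (g 0)"
      by (simp add: exp_diff exp_add)
    then show ?thesis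
      using fg[OF that] exp_g0 r by (simp add: exp_of_real)
  qed
  have "p 0 = of_real (- ln r)"
    by (simp add: p_def)
  moreover have "0 \<le> Re (p z)" if "z \<in> unit_disc" for z
  proof -
    have "exp (- Re (p z)) = norm (f z)"
      using f_eq[OF that] by simp
    then show ?thesis
      using fle[OF that] by (metis exp_le_one_iff neg_le_0_iff_le)
  qed
  moreover have "p holomorphic_on unit_disc"
    unfolding p_def using ghol by (intro holomorphic_intros) auto
  ultimately show ?thesis
    using that f_eq by blast
qed

(* The equation Q' = R' Q is the power series form of Q = Q(0) exp (R - R(0)). *)
lemma fps_nth_of_deriv_eq_mult:
  fixes Q R :: "'a :: field_char_0 fps"
  assumes ode: "fps_deriv Q = fps_deriv R * Q" and m: "0 < m"
    and low: "\<And>i. 0 < i \<Longrightarrow> i < m \<Longrightarrow> fps_nth R i = 0"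
  shows "fps_nth Q m = fps_nth R m * fps_nth Q 0"
proof -
  obtain k where mk: "m = Suc k"
    using m gr0_conv_Suc by blast
  have vanish: "(\<Sum>i\<in>{0..k} - {k}. fps_nth (fps_deriv R) i * fps_nth Q (k - i)) = 0"
    using low mk by (intro sum.neutral) auto
  have "of_nat m * fps_nth Q m = fps_nth (fps_deriv R * Q) k"
    by (simp add: mk flip: ode)
  also have "\<dots> = (\<Sum>i=0..k. fps_nth (fps_deriv R) i * fps_nth Q (k - i))"
    by (rule fps_mult_nth)
  also have "\<dots> = fps_nth (fps_deriv R) k * fps_nth Q 0"
    using vanish by (subst sum.remove[of _ k]) auto
  also have "\<dots> = of_nat m * (fps_nth R m * fps_nth Q 0)"
    by (simp add: mk)
  finally show ?thesis
    using m by simp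
qed

lemma fps_nth_eq_0_of_deriv_eq_mult:
  fixes Q R :: "'a :: field_char_0 fps"
  assumes ode: "fps_deriv Q = fps_deriv R * Q" and Q0: "fps_nth Q 0 \<noteq> 0"
    and low: "\<And>i. 0 < i \<Longrightarrow> i < m \<Longrightarrow> fps_nth Q i = 0"
  shows "0 < j \<Longrightarrow> j < m \<Longrightarrow> fps_nth R j = 0"
proof (induction j rule: less_induct)
  case (less j)
  have "fps_nth Q j = fps_nth R j * fps_nth Q 0"
    by (rule fps_nth_of_deriv_eq_mult[OF ode]) (use less in auto)
  then show ?case
    using low[OF less.prems] Q0 by simp
qed

lemma fps_deriv_fps_expansion_exp:
  assumes hol: "p holomorphic_on unit_disc"
  shows "fps_deriv (fps_expansion (\<lambda>z. exp (c * p z)) 0) =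
           fps_deriv (fps_const c * fps_expansion p 0) * fps_expansion (\<lambda>z. exp (c * p z)) 0"
    (is "fps_deriv ?E = _")
proof -
  define E q where "E = ?E" and "q = (\<lambda>z. exp (c * p z))"
  have "q holomorphic_on unit_disc"
    unfolding q_def using hol by (intro holomorphic_intros)
  then have qexp: "q has_fps_expansion E"
    unfolding E_def q_def[symmetric] by (rule holomorphic_on_unit_disc_has_fps_expansion)
  have pexp: "p has_fps_expansion fps_expansion p 0"
    using hol by (rule holomorphic_on_unit_disc_has_fps_expansion)
  have "deriv q z = c * deriv p z * q z" if "z \<in> unit_disc" for z
  proof -
    have "(q has_field_derivative exp (c * p z) * (c * deriv p z)) (at z)"
      unfolding q_def using holomorphic_derivI[OF hol open_ball that]
      by (auto intro!: derivative_eq_intros)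
    then show ?thesis
      unfolding q_def by (simp add: DERIV_imp_deriv mult_ac)
  qed
  then have "eventually (\<lambda>z. deriv q z = c * deriv p z * q z) (nhds 0)"
    using eventually_nhds_in_open[of unit_disc 0] by (auto elim: eventually_mono)
  then have "(\<lambda>z. c * deriv p z * q z) has_fps_expansion fps_deriv E"
    using has_fps_expansion_cong[of "deriv q" "\<lambda>z. c * deriv p z * q z", OF _ refl]
      has_fps_expansion_deriv[OF qexp] by blast
  moreover have "(\<lambda>z. c * deriv p z * q z) has_fps_expansion fps_deriv (fps_const c * fps_expansion p 0) * E"
    using has_fps_expansion_mult[OF has_fps_expansion_cmult_left[OF has_fps_expansion_deriv[OF pexp]] qexp]
    by simp
  ultimately show ?thesis
    unfolding E_def[symmetric] by (rule fps_expansion_unique_complex)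
qed

lemma taylor_coeff_exp_mult:
  fixes c :: complex
  assumes hol: "p holomorphic_on unit_disc" and n: "0 < n"
    and low: "\<And>k. 0 < k \<Longrightarrow> k < n \<Longrightarrow> fps_nth (fps_expansion p 0) k = 0"
  shows "taylor_coeff (\<lambda>z. exp (c * p z)) n = c * fps_nth (fps_expansion p 0) n * exp (c * p 0)"
proof -
  have "taylor_coeff (\<lambda>z. exp (c * p z)) n =
      fps_nth (fps_const c * fps_expansion p 0) n * fps_nth (fps_expansion (\<lambda>z. exp (c * p z)) 0) 0"
    unfolding taylor_coeff_eq_fps_expansion_nth
    by (rule fps_nth_of_deriv_eq_mult[OF fps_deriv_fps_expansion_exp[OF hol] n]) (simp add: low)
  then show ?thesis
    by (simp add: fps_expansion_def)
qed

lemma fps_expansion_nth_eq_0_of_exp: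
  fixes c :: complex
  assumes hol: "p holomorphic_on unit_disc" and c: "c \<noteq> 0"
    and low: "\<And>k. 0 < k \<Longrightarrow> k < n \<Longrightarrow> taylor_coeff (\<lambda>z. exp (c * p z)) k = 0"
    and j: "0 < j" "j < n"
  shows "fps_nth (fps_expansion p 0) j = 0"
proof -
  have "fps_nth (fps_const c * fps_expansion p 0) j = 0"
    using fps_nth_eq_0_of_deriv_eq_mult[OF fps_deriv_fps_expansion_exp[OF hol], of c n j] low j
    by (simp add: fps_expansion_def taylor_coeff_eq_fps_expansion_nth)
  then show ?thesis
    using c by simp
qed

lemma exp_neg_taylor_coeffs:
  assumes hol: "p holomorphic_on unit_disc" and f: "\<And>z. z \<in> unit_disc \<Longrightarrow> f z = exp (- p z)"
    and n: "0 < n" and f_low: "\<And>k. 0 < k \<Longrightarrow> k < n \<Longrightarrow> taylor_coeff f k = 0"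
  shows "\<And>k. 0 < k \<Longrightarrow> k < n \<Longrightarrow> fps_nth (fps_expansion p 0) k = 0"
    and "taylor_coeff f n = - fps_nth (fps_expansion p 0) n * f 0"
proof -
  have f_eq: "taylor_coeff f = taylor_coeff (\<lambda>z. exp (- 1 * p z))"
    using f by (intro taylor_coeff_cong_unit_disc) simp
  show low: "fps_nth (fps_expansion p 0) k = 0" if "0 < k" "k < n" for k
    using fps_expansion_nth_eq_0_of_exp[OF hol _ _ that, of "- 1"] f_low f_eq by simp
  show "taylor_coeff f n = - fps_nth (fps_expansion p 0) n * f 0"
    using taylor_coeff_exp_mult[OF hol n low, of "- 1"] f_eq f[of 0] by simp
qed

lemma eq_1_if_mult_exp_le:
  fixes t :: real
  assumes le: "\<And>s. 0 < s \<Longrightarrow> s * exp (- (s * t)) \<le> exp (- t)"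
  shows "t = 1"
proof -
  have "0 < t"
  proof (rule ccontr)
    assume "\<not> 0 < t"
    then have "exp (- t) \<le> exp (- (2 * t))"
      by simp
    then show False
      using le[of 2] exp_gt_zero[of "- t"] by linarith
  qed
  then have "exp (- 1) \<le> t * exp (- t)"
    using le[of "1 / t"] by (simp add: field_simps)
  then have "exp (t - 1) \<le> 1 + (t - 1)"
    by (simp add: exp_diff exp_minus field_simps)
  then show ?thesis
    using exp_minus_greater[of "1 - t"] by simp
qed

lemma krzyz_extremal_exp_neg_at_0_eq_1:
  assumes ext: "krzyz_extremal n f" and n: "0 < n"
    and hol: "p holomorphic_on unit_disc" and Re: "\<And>z. z \<in> unit_disc \<Longrightarrow> 0 \<le> Re (p z)"
    and f: "\<And>z. z \<in> unit_disc \<Longrightarrow> f z = exp (- p z)" and p0: "p 0 = of_real t"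
    and low: "\<And>k. 0 < k \<Longrightarrow> k < n \<Longrightarrow> fps_nth (fps_expansion p 0) k = 0"
    and pn: "fps_nth (fps_expansion p 0) n \<noteq> 0"
  shows "t = 1"
proof (rule eq_1_if_mult_exp_le)
  fix s :: real
  assume s: "0 < s"
  define P where "P = fps_expansion p 0"
  have coeff: "taylor_coeff (\<lambda>z. exp (- of_real u * p z)) n = - of_real (u * exp (- (u * t))) * fps_nth P n" for u
    using taylor_coeff_exp_mult[OF hol n low, of "- of_real u"] p0
    by (simp add: P_def exp_of_real[symmetric])
  have "(\<lambda>z. exp (- of_real s * p z)) \<in> krzyz_class"
    unfolding krzyz_class_def using hol Re s
    by (auto intro!: holomorphic_intros)
  then have "norm (taylor_coeff (\<lambda>z. exp (- of_real s * p z)) n) \<le> norm (taylor_coeff f n)"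
    using ext by (simp add: krzyz_extremal_def)
  also have "taylor_coeff f = taylor_coeff (\<lambda>z. exp (- of_real 1 * p z))"
    using f by (intro taylor_coeff_cong_unit_disc) simp
  finally have "norm (taylor_coeff (\<lambda>z. exp (- of_real s * p z)) n) \<le>
      norm (taylor_coeff (\<lambda>z. exp (- of_real 1 * p z)) n)" .
  then have "s * exp (- (s * t)) * norm (fps_nth P n) \<le> exp (- t) * norm (fps_nth P n)"
    using s unfolding coeff by (simp add: norm_mult)
  then show "s * exp (- (s * t)) \<le> exp (- t)"
    using pn by (simp add: P_def)
qed

section \<open>The equality case of Caratheodory's coefficient bound\<close>

lemma holomorphic_factor_power_at_0:
  assumes hol: "g holomorphic_on S" and S: "open S" "0 \<in> S"
    and nz: "fps_expansion g 0 \<noteq> 0" and low: "\<And>k. k < n \<Longrightarrow> fps_nth (fps_expansion g 0) k = 0"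
  obtains w where "w holomorphic_on S" "\<And>z. z \<in> S \<Longrightarrow> g z = z ^ n * w z"
    "w 0 = fps_nth (fps_expansion g 0) n"
proof -
  define G where "G = fps_expansion g 0"
  define w where "w = (\<lambda>z. if z = 0 then fps_nth G n else g z / z ^ n)"
  have "g has_fps_expansion G"
    unfolding G_def using S hol by (rule has_fps_expansion_fps_expansion)
  moreover have "n \<le> subdegree G"
    using nz low by (intro subdegree_geI) (auto simp: G_def)
  ultimately have "w has_fps_expansion fps_shift n G"
    unfolding w_def by (intro has_fps_expansion_shift) auto
  then have "w analytic_on {0}"
    by (rule has_fps_expansion_imp_analytic_0)
  moreover have "w holomorphic_on (S - {0})"
  proof (rule holomorphic_transform[of "\<lambda>z. g z / z ^ n"])
    show "(\<lambda>z. g z / z ^ n) holomorphic_on S - {0}"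
      using hol by (intro holomorphic_intros) auto
  qed (simp add: w_def)
  then have "w analytic_on (S - {0})"
    using S by (simp add: analytic_on_open open_Diff)
  ultimately have "w analytic_on (S - {0} \<union> {0})"
    unfolding analytic_on_Un by blast
  moreover have "S - {0} \<union> {0} = S"
    using S by auto
  ultimately have "w holomorphic_on S"
    by (metis analytic_imp_holomorphic)
  moreover have "g z = z ^ n * w z" if "z \<in> S" for z
  proof (cases "z = 0")
    case True
    have "fps_nth G 0 = g 0"
      by (simp add: G_def fps_expansion_def)
    then show ?thesis
      using True low[of 0] by (cases "n = 0") (simp_all add: w_def G_def)
  qed (simp add: w_def)
  ultimately show ?thesis
    using that by (simp add: w_def G_def)
qed

lemma norm_le_1_if_norm_power_mult_le_1:
  assumes hol: "\<psi> holomorphic_on unit_disc"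
    and bnd: "\<And>z. z \<in> unit_disc \<Longrightarrow> norm (z ^ n * \<psi> z) \<le> 1"
    and z: "z \<in> unit_disc"
  shows "norm (\<psi> z) \<le> 1"
proof -
  have "norm (\<psi> z) \<le> 1 / r ^ n" if r: "norm z < r" "r < 1" for r
  proof (rule maximum_modulus_frontier[of \<psi> "cball 0 r"])
    have sub: "cball 0 r \<subseteq> unit_disc"
      using r by auto
    show "\<psi> holomorphic_on interior (cball 0 r)"
      using hol by (rule holomorphic_on_subset) (use sub in auto)
    show "continuous_on (closure (cball 0 r)) \<psi>"
      using holomorphic_on_imp_continuous_on[OF hol] by (rule continuous_on_subset) (use sub in auto)
    show "z \<in> cball 0 r"
      using r by simp
  next
    fix w :: complex
    assume "w \<in> frontier (cball 0 r)"
    then have w: "norm w = r" "w \<in> unit_disc"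
      using r by auto
    then have "r ^ n * norm (\<psi> w) \<le> 1"
      using bnd[of w] by (simp add: norm_mult norm_power)
    moreover have "0 < r"
      using r(1) norm_ge_zero[of z] by linarith
    ultimately show "norm (\<psi> w) \<le> 1 / r ^ n"
      by (simp add: field_simps)
  qed simp
  then have "eventually (\<lambda>r. norm (\<psi> z) \<le> 1 / r ^ n) (at_left 1)"
    unfolding eventually_at_left_field using z by (intro exI[of _ "norm z"]) auto
  moreover have "((\<lambda>r::real. 1 / r ^ n) \<longlongrightarrow> 1) (at_left 1)"
    by (auto intro!: tendsto_eq_intros)
  ultimately show ?thesis
    using tendsto_lowerbound trivial_limit_at_left_real by blast
qed

lemma norm_minus_1_le_norm_plus_1:
  fixes u :: complex
  assumes "0 \<le> Re u"
  shows "norm (u - 1) \<le> norm (u + 1)"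
proof (rule power2_le_imp_le)
  show "(norm (u - 1))\<^sup>2 \<le> (norm (u + 1))\<^sup>2"
    unfolding cmod_power2 using assms by (simp add: power2_eq_square algebra_simps)
qed simp

lemma caratheodory_coeff_extremal:
  assumes hol: "p holomorphic_on unit_disc" and Re: "\<And>z. z \<in> unit_disc \<Longrightarrow> 0 \<le> Re (p z)"
    and p0: "p 0 = 1" and low: "\<And>k. 0 < k \<Longrightarrow> k < n \<Longrightarrow> fps_nth (fps_expansion p 0) k = 0"
    and pn: "fps_nth (fps_expansion p 0) n = - 2" and z: "z \<in> unit_disc"
  shows "p z = (1 - z ^ n) / (1 + z ^ n)"
proof -
  define G where "G = fps_expansion (\<lambda>z. p z - 1) 0"
  have G_nth: "fps_nth G k = fps_nth (fps_expansion p 0) k - (if k = 0 then 1 else 0)" for k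
  proof -
    have "(\<lambda>z. p z - 1) has_fps_expansion fps_expansion p 0 - 1"
      using hol by (intro has_fps_expansion_diff holomorphic_on_unit_disc_has_fps_expansion) auto
    then show ?thesis
      by (simp add: G_def fps_expansion_eqI)
  qed
  have G_low: "fps_nth G k = 0" if "k < n" for k
    using low[of k] that p0 by (cases "k = 0") (simp_all add: G_nth fps_expansion_def)
  have n: "n \<noteq> 0"
  proof
    assume "n = 0"
    then show False
      using pn p0 by (simp add: fps_expansion_def)
  qed
  then have Gn: "fps_nth G n = - 2"
    by (simp add: G_nth pn)
  then have G_nz: "G \<noteq> 0"
    by auto
  have "(\<lambda>z. p z - 1) holomorphic_on unit_disc"
    using hol by (intro holomorphic_intros)
  then obtain w where w: "w holomorphic_on unit_disc" "\<And>z. z \<in> unit_disc \<Longrightarrow> p z - 1 = z ^ n * w z"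
    and "w 0 = fps_nth G n"
    unfolding G_def by (rule holomorphic_factor_power_at_0[where n = n]) (use G_nz G_low in \<open>auto simp: G_def\<close>)
  then have w0: "w 0 = - 2"
    using Gn by simp
  have den: "p z + 1 \<noteq> 0" if "z \<in> unit_disc" for z
    using Re[OF that] by (auto simp: complex_eq_iff)
  define \<psi> where "\<psi> = (\<lambda>z. w z / (p z + 1))"
  have \<psi>_hol: "\<psi> holomorphic_on unit_disc"
    unfolding \<psi>_def using w(1) hol den by (intro holomorphic_intros) auto
  have bound: "norm (z ^ n * \<psi> z) \<le> 1" if "z \<in> unit_disc" for z
  proof -
    have "norm (z ^ n * \<psi> z) = norm (p z - 1) / norm (p z + 1)"
      using w(2)[OF that] by (simp add: \<psi>_def norm_mult norm_divide)
    also have "\<dots> \<le> 1"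
      using norm_minus_1_le_norm_plus_1[OF Re[OF that]] den[OF that] by (simp add: divide_le_eq_1)
    finally show ?thesis .
  qed
  have "norm (\<psi> z) \<le> 1" if "z \<in> unit_disc" for z
    using \<psi>_hol bound that by (rule norm_le_1_if_norm_power_mult_le_1)
  moreover have \<psi>0: "\<psi> 0 = - 1"
    using w0 p0 by (simp add: \<psi>_def)
  ultimately have "\<psi> constant_on unit_disc"
    by (intro maximum_modulus_principle[OF \<psi>_hol open_ball connected_ball open_ball subset_refl, of 0]) auto
  then have "\<psi> z = - 1"
    using z \<psi>0 unfolding constant_on_def by (metis centre_in_ball zero_less_one)
  then have wz: "w z = - (p z + 1)"
    using den[OF z] by (simp add: \<psi>_def field_simps)
  have "p z - 1 = z ^ n * w z"
    using w(2)[OF z] .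
  also have "\<dots> = - (z ^ n * (p z + 1))"
    unfolding wz by (rule mult_minus_right)
  finally have "p z - 1 = - (z ^ n * (p z + 1))" .
  moreover have "1 + z ^ n \<noteq> 0"
  proof
    assume "1 + z ^ n = 0"
    then have "norm (z ^ n) = 1"
      by (metis add_eq_0_iff norm_minus_cancel norm_one)
    moreover have "norm z ^ n < 1"
      using z n by (simp add: power_less_one_iff)
    ultimately show False
      by (simp add: norm_power)
  qed
  ultimately show ?thesis
    by (simp add: field_simps)
qed

theorem theorem9:
  fixes n :: nat and f :: "complex \<Rightarrow> complex"
  assumes "n \<ge> 1"
    and "krzyz_extremal n f"
    and "taylor_coeff f n = 2 * taylor_coeff f 0"
    and "taylor_coeff f 0 \<in> \<real>" and "Re (taylor_coeff f 0) > 0"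
  shows "\<forall>z\<in>unit_disc. f z = exp (- (1 - z ^ n) / (1 + z ^ n))"
proof -
  define r where "r = Re (taylor_coeff f 0)"
  have n: "0 < n" and ext: "krzyz_extremal n f" and fB: "f \<in> krzyz_class" and r: "0 < r"
    using assms by (auto simp: r_def krzyz_extremal_def)
  have a0: "taylor_coeff f 0 = of_real r" and an: "taylor_coeff f n = of_real (2 * r)"
    using assms(3,4) by (auto simp: r_def complex_is_Real_iff complex_eq_iff)
  have f_low: "taylor_coeff f k = 0" if "0 < k" "k < n" for k
    using krzyz_extremal_coeff_eq_0[OF ext _ a0 an that] r by simp
  have f0: "f 0 = of_real r"
    using a0 by (simp add: taylor_coeff_def)
  obtain p where hol: "p holomorphic_on unit_disc" and p0: "p 0 = of_real (- ln r)"
    and Re: "\<And>z. z \<in> unit_disc \<Longrightarrow> 0 \<le> Re (p z)" and f: "\<And>z. z \<in> unit_disc \<Longrightarrow> f z = exp (- p z)"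
    using krzyz_class_imp_exp_neg[OF fB f0 r] by blast
  note p_low = exp_neg_taylor_coeffs(1)[OF hol f n f_low]
  have "- (fps_nth (fps_expansion p 0) n * of_real r) = 2 * of_real r"
    using exp_neg_taylor_coeffs(2)[OF hol f n f_low] an f0 by simp
  then have pn: "fps_nth (fps_expansion p 0) n = - 2"
    using r by (metis minus_equation_iff mult_minus_left mult_cancel_right of_real_eq_0_iff less_irrefl)
  have "- ln r = 1"
    using krzyz_extremal_exp_neg_at_0_eq_1[OF ext n hol Re f p0 p_low] pn by simp
  then have "p z = (1 - z ^ n) / (1 + z ^ n)" if "z \<in> unit_disc" for z
    using caratheodory_coeff_extremal[OF hol Re _ p_low pn that] p0 by simp
  then show ?thesis
    using f by (simp add: minus_divide_left)
qed

end
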